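(* Let $X$ be a compact metric space and $f_{1,\infty}=\{f_n\}$ an equicontinuous sequence of continuous maps $f_n:X\to X$, and let $\mu_{1,\infty}=\{\mu_n\}$ be a sequence of Borel probability measures on $X$ with $f_n\mu_n=\mu_{n+1}$ for all $n$. If the closure of $\{\mu_n\}$ with respect to the strong topology on the space of Borel probability measures is compact, then the Misiurewicz class $\mathcal{E}_{\mathrm{M}}$ contains all constant sequences $\mathcal{P}_n\equiv\mathcal{P}$, $\mathcal{P}$ a finite Borel partition of $X$.
   Context: The strong topology on Borel probability measures is the topology of setwise convergence: $\mu_\alpha\to\mu$ iff $\mu_\alpha(A)\to\mu(A)$ for every Borel set $A$. Equicontinuity: for every $\varepsilon>0$ there is $\delta>0$ with $\varrho(f_nx,f_ny)<\varepsilon$ whenever $\varrho(x,y)<\delta$, for all $n$. Misiurewicz class $\mathcal{E}_{\mathrm{M}}$ (for the system with $X_n=X$ and measures $\mu_n$): the set of sequences $\{\mathcal{P}_n\}$ of finite Borel partitions $\mathcal{P}_n=\{P_{n,1},\dots,P_{n,k_n}\}$ of $X$ with $\sup_nk_n<\infty$ such that for every $\varepsilon>0$ there exist $\delta>0$ and compact sets $C_{n,i}\subset P_{n,i}$ with, for all $n$: (a) $\mu_n(P_{n,i}\setminus C_{n,i})\le\varepsilon$; (b) $\varrho(x,y)\ge\delta$ for all $x\in C_{n,i}$, $y\in C_{n,j}$, $i\neq j$. *)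

theory Defs
  imports "HOL-Probability.Probability"
begin

definition borel_prob_measures :: "'a::topological_space measure set" where
  "borel_prob_measures = {M. prob_space M \<and> sets M = sets (borel :: 'a measure)}"

text \<open>Strong topology: topology of setwise convergence, i.e. the coarsest topology on
  the Borel probability measures making every evaluation M |-> M(A), A Borel, continuous
  (pullback of the product topology on real-valued functions on the Borel sets).\<close>
definition strong_topology :: "'a::topological_space measure topology" where
  "strong_topology =
     pullback_topology borel_prob_measures
       (\<lambda>M. restrict (\<lambda>A. measure M A) (sets (borel :: 'a measure)))
       (product_topology (\<lambda>_. euclideanreal) (sets (borel :: 'a measure)))"

definition equicontinuous_seq :: "(nat \<Rightarrow> 'a::metric_space \<Rightarrow> 'a) \<Rightarrow> bool" where
  "equicontinuous_seq f \<longleftrightarrow>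
     (\<forall>\<epsilon>>0. \<exists>\<delta>>0. \<forall>n x y. dist x y < \<delta> \<longrightarrow> dist (f n x) (f n y) < \<epsilon>)"

definition finite_borel_partition :: "nat \<Rightarrow> (nat \<Rightarrow> 'a::topological_space set) \<Rightarrow> bool" where
  "finite_borel_partition k P \<longleftrightarrow>
     (\<forall>i<k. P i \<in> sets borel) \<and>
     (\<forall>i<k. \<forall>j<k. i \<noteq> j \<longrightarrow> P i \<inter> P j = {}) \<and>
     (\<Union>i<k. P i) = UNIV"

definition misiurewicz_class ::
  "(nat \<Rightarrow> 'a::metric_space measure) \<Rightarrow> (nat \<Rightarrow> nat) \<Rightarrow> (nat \<Rightarrow> nat \<Rightarrow> 'a set) \<Rightarrow> bool" where
  "misiurewicz_class \<mu> k P \<longleftrightarrow>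
     (\<forall>n. finite_borel_partition (k n) (P n)) \<and>
     bdd_above (range k) \<and>
     (\<forall>\<epsilon>>0. \<exists>\<delta>>0. \<exists>C :: nat \<Rightarrow> nat \<Rightarrow> 'a set.
        \<forall>n. \<forall>i<k n.
          compact (C n i) \<and> C n i \<subseteq> P n i \<and>
          measure (\<mu> n) (P n i - C n i) \<le> \<epsilon> \<and>
          (\<forall>j<k n. i \<noteq> j \<longrightarrow> (\<forall>x\<in>C n i. \<forall>y\<in>C n j. dist x y \<ge> \<delta>)))"

end

theory Submission
  imports Defs
begin

text \<open>Every finite Borel measure on a metric space is inner regular by closed sets, which are compact
  since \<open>X\<close> is, so the strongly open sets \<open>{M. M(B - K) < \<epsilon>}\<close> with \<open>K \<subseteq> B\<close> compact cover the
  orbit closure; a finite subcover gives one compact \<open>K \<subseteq> B\<close>, the union of its finitely many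
  sets, with \<open>\<mu>\<^sub>n(B - K) < \<epsilon>\<close> for all \<open>n\<close>. Doing this for each atom of the partition yields
  finitely many pairwise disjoint compact sets, and these are a positive distance apart.\<close>

lemma (in finite_measure) measure_Diff_incseq_small:
  assumes "range A \<subseteq> sets M" "incseq A" "e > 0"
  shows "\<exists>n. measure M ((\<Union>i. A i) - A n) < e"
proof -
  have "(\<lambda>n. measure M (A n)) \<longlonglongrightarrow> measure M (\<Union>i. A i)"
    using finite_Lim_measure_incseq assms by blast
  from LIMSEQ_D[OF this \<open>e > 0\<close>] obtain n
    where "\<bar>measure M (A n) - measure M (\<Union>i. A i)\<bar> < e"
    by auto
  moreover have "measure M ((\<Union>i. A i) - A n) = measure M (\<Union>i. A i) - measure M (A n)"
    using assms by (intro finite_measure_Diff) auto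
  ultimately show ?thesis by (intro exI[of _ n]) linarith
qed

lemma (in finite_measure) measure_Diff_le_add:
  assumes "A \<in> sets M" "B \<in> sets M" "C \<in> sets M"
  shows "measure M (A - C) \<le> measure M (A - B) + measure M (B - C)"
proof -
  have "measure M (A - C) \<le> measure M ((A - B) \<union> (B - C))"
    using assms by (intro finite_measure_mono) auto
  also have "\<dots> \<le> measure M (A - B) + measure M (B - C)"
    using assms by (intro measure_subadditive) auto
  finally show ?thesis .
qed

definition closed_inner_regular :: "'a::topological_space measure \<Rightarrow> 'a set \<Rightarrow> bool" where
  "closed_inner_regular M A \<longleftrightarrow> (\<forall>e>0. \<exists>F. closed F \<and> F \<subseteq> A \<and> measure M (A - F) < e)"

lemma closed_inner_regular_closed: "closed F \<Longrightarrow> closed_inner_regular M F"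
  unfolding closed_inner_regular_def by auto

lemma closed_inner_regular_approx:
  assumes "finite_measure M" "sets M = sets borel" "A \<in> sets M"
    and approx: "\<And>e. e > 0 \<Longrightarrow> \<exists>B\<in>sets M. B \<subseteq> A \<and> closed_inner_regular M B \<and> measure M (A - B) < e"
  shows "closed_inner_regular M A"
  unfolding closed_inner_regular_def
proof (intro allI impI)
  fix e :: real assume "e > 0"
  interpret finite_measure M by fact
  obtain B where B: "B \<in> sets M" "B \<subseteq> A" "closed_inner_regular M B" "measure M (A - B) < e / 2"
    using approx[of "e / 2"] \<open>e > 0\<close> by auto
  then obtain F where F: "closed F" "F \<subseteq> B" "measure M (B - F) < e / 2"
    using \<open>e > 0\<close> unfolding closed_inner_regular_def by (meson half_gt_zero)
  have "measure M (A - F) \<le> measure M (A - B) + measure M (B - F)"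
    using assms(2,3) B(1) F(1) by (intro measure_Diff_le_add) auto
  then show "\<exists>F. closed F \<and> F \<subseteq> A \<and> measure M (A - F) < e"
    using B F by (intro exI[of _ F]) auto
qed

lemma closed_inner_regular_open:
  fixes U :: "'a::metric_space set"
  assumes "finite_measure M" "sets M = sets borel" "open U"
  shows "closed_inner_regular M U"
proof (rule closed_inner_regular_approx[OF assms(1,2)])
  interpret finite_measure M by fact
  obtain C where C: "\<And>n. closed (C n)" "\<And>n. C n \<subseteq> C (Suc n)" "(\<Union>n. C n) = U"
    using open_imp_fsigma_in[OF metrizable_space_euclidean, of U] \<open>open U\<close>
    unfolding fsigma_in_ascending by auto
  have C_sets: "range C \<subseteq> sets M" and "incseq C"
    using C assms(2) by (auto intro: incseq_SucI)
  show "U \<in> sets M" using assms(2,3) by simp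
  fix e :: real assume "e > 0"
  from measure_Diff_incseq_small[OF C_sets \<open>incseq C\<close> this]
  obtain n where "measure M (U - C n) < e" using C(3) by auto
  then show "\<exists>B\<in>sets M. B \<subseteq> U \<and> closed_inner_regular M B \<and> measure M (U - B) < e"
    using C C_sets by (intro bexI[of _ "C n"]) (auto intro: closed_inner_regular_closed)
qed

lemma closed_inner_regular_Un:
  assumes "finite_measure M" "sets M = sets borel" "A \<in> sets M" "B \<in> sets M"
    and "closed_inner_regular M A" "closed_inner_regular M B"
  shows "closed_inner_regular M (A \<union> B)"
  unfolding closed_inner_regular_def
proof (intro allI impI)
  fix e :: real assume "e > 0"
  interpret finite_measure M by fact
  obtain F G where F: "closed F" "F \<subseteq> A" "measure M (A - F) < e / 2"
    and G: "closed G" "G \<subseteq> B" "measure M (B - G) < e / 2"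
    using assms(5,6) \<open>e > 0\<close> unfolding closed_inner_regular_def by (meson half_gt_zero)
  have "measure M ((A \<union> B) - (F \<union> G)) \<le> measure M ((A - F) \<union> (B - G))"
    using assms(2-4) F(1) G(1) by (intro finite_measure_mono) auto
  also have "\<dots> \<le> measure M (A - F) + measure M (B - G)"
    using assms(2-4) F(1) G(1) by (intro measure_subadditive) auto
  finally show "\<exists>H. closed H \<and> H \<subseteq> A \<union> B \<and> measure M (A \<union> B - H) < e"
    using F G by (intro exI[of _ "F \<union> G"]) auto
qed

lemma closed_inner_regular_UN:
  fixes A :: "nat \<Rightarrow> 'a::topological_space set"
  assumes "finite_measure M" "sets M = sets borel"
    and "\<And>i. A i \<in> sets M" "\<And>i. closed_inner_regular M (A i)"
  shows "closed_inner_regular M (\<Union>i. A i)"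
proof (rule closed_inner_regular_approx[OF assms(1,2)])
  interpret finite_measure M by fact
  define S where "S n = (\<Union>i<n. A i)" for n
  have S_sets: "range S \<subseteq> sets M"
    using assms(3) by (auto simp: S_def)
  have "incseq S"
    unfolding S_def incseq_def by (auto intro: less_le_trans)
  have "(\<Union>n. S n) = (\<Union>i. A i)"
    by (auto simp: S_def)
  have S_regular: "closed_inner_regular M (S n)" for n
  proof (induction n)
    case 0 then show ?case by (simp add: S_def closed_inner_regular_closed)
  next
    case (Suc n)
    then show ?case
      using closed_inner_regular_Un[OF assms(1,2) assms(3) _ assms(4)] S_sets
      by (auto simp: S_def lessThan_Suc)
  qed
  show "(\<Union>i. A i) \<in> sets M" using assms(3) by auto
  fix e :: real assume "e > 0"
  from measure_Diff_incseq_small[OF S_sets \<open>incseq S\<close> this]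
  obtain n where "measure M ((\<Union>i. A i) - S n) < e"
    using \<open>(\<Union>n. S n) = (\<Union>i. A i)\<close> by auto
  then show "\<exists>B\<in>sets M. B \<subseteq> (\<Union>i. A i) \<and> closed_inner_regular M B \<and> measure M ((\<Union>i. A i) - B) < e"
    using S_sets S_regular by (intro bexI[of _ "S n"]) (auto simp: S_def)
qed

lemma closed_inner_regular_INT:
  fixes A :: "nat \<Rightarrow> 'a::topological_space set"
  assumes "finite_measure M" "sets M = sets borel"
    and "\<And>i. A i \<in> sets M" "\<And>i. closed_inner_regular M (A i)"
  shows "closed_inner_regular M (\<Inter>i. A i)"
  unfolding closed_inner_regular_def
proof (intro allI impI)
  fix e :: real assume "e > 0"
  interpret finite_measure M by fact
  define c where "c i = e / 4 * (1 / 2) ^ i" for i :: nat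
  have "summable c"
    unfolding c_def by (intro summable_mult summable_geometric) auto
  have "(\<Sum>i. c i) = e / 2"
    unfolding c_def using suminf_mult[OF summable_geometric, of "1 / 2 :: real" "e / 4"]
    by (simp add: suminf_geometric)
  have "c i > 0" for i
    using \<open>e > 0\<close> by (simp add: c_def)
  then have "\<forall>i. \<exists>F. closed F \<and> F \<subseteq> A i \<and> measure M (A i - F) < c i"
    using assms(4) unfolding closed_inner_regular_def by blast
  then obtain F where F: "\<And>i. closed (F i)" "\<And>i. F i \<subseteq> A i" "\<And>i. measure M (A i - F i) < c i"
    by metis
  have gaps_sets: "A i - F i \<in> sets M" for i
    using assms(2,3) F(1) by auto
  have "summable (\<lambda>i. measure M (A i - F i))"
    using F(3) by (intro summable_comparison_test[OF _ \<open>summable c\<close>]) (auto intro!: less_imp_le)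
  have "measure M ((\<Inter>i. A i) - (\<Inter>i. F i)) \<le> measure M (\<Union>i. A i - F i)"
    using gaps_sets by (intro finite_measure_mono) auto
  also have "\<dots> \<le> (\<Sum>i. measure M (A i - F i))"
    using gaps_sets \<open>summable (\<lambda>i. measure M (A i - F i))\<close>
    by (intro finite_measure_subadditive_countably) auto
  also have "\<dots> \<le> (\<Sum>i. c i)"
    using F(3) \<open>summable (\<lambda>i. measure M (A i - F i))\<close> \<open>summable c\<close>
    by (intro suminf_le less_imp_le)
  finally have "measure M ((\<Inter>i. A i) - (\<Inter>i. F i)) \<le> e / 2"
    using \<open>(\<Sum>i. c i) = e / 2\<close> by simp
  moreover have "closed (\<Inter>i. F i)" "(\<Inter>i. F i) \<subseteq> (\<Inter>i. A i)"
    using F(1,2) by blast+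
  ultimately show "\<exists>G. closed G \<and> G \<subseteq> (\<Inter>i. A i) \<and> measure M ((\<Inter>i. A i) - G) < e"
    using \<open>e > 0\<close> by (intro exI[of _ "\<Inter>i. F i"] conjI) (assumption | linarith)+
qed

lemma closed_inner_regular_borel:
  fixes M :: "'a::metric_space measure"
  assumes "finite_measure M" "sets M = sets borel" "A \<in> sets borel"
  shows "closed_inner_regular M A \<and> closed_inner_regular M (- A)"
proof -
  from \<open>A \<in> sets borel\<close> have "A \<in> sigma_sets UNIV {S. open S}"
    by (simp add: sets_borel)
  then show ?thesis
  proof induct
    case (Basic U)
    then show ?case
      using closed_inner_regular_open[OF assms(1,2)] closed_inner_regular_closed[of "- U"] by auto
  next
    case Empty
    show ?case by (auto intro: closed_inner_regular_closed)
  next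
    case (Compl U)
    then show ?case by (simp add: Compl_eq_Diff_UNIV[symmetric])
  next
    case (Union U)
    have "U i \<in> sets borel" for i
      using Union(1)[of i] by (simp add: sets_borel)
    then have sets: "U i \<in> sets M" "- U i \<in> sets M" for i
      using assms(2) by (auto simp: borel_comp)
    have "closed_inner_regular M (\<Union>i. U i)"
      using sets(1) Union(2) by (intro closed_inner_regular_UN[OF assms(1,2)]) auto
    moreover have "closed_inner_regular M (\<Inter>i. - U i)"
      using sets(2) Union(2) by (intro closed_inner_regular_INT[OF assms(1,2)]) auto
    ultimately show ?case by simp
  qed
qed

lemma compact_space_inner_regular:
  fixes M :: "'a::metric_space measure"
  assumes "compact (UNIV :: 'a set)" "finite_measure M" "sets M = sets borel" "A \<in> sets borel" "e > 0"
  shows "\<exists>K. compact K \<and> K \<subseteq> A \<and> measure M (A - K) < e"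
proof -
  obtain F where "closed F" "F \<subseteq> A" "measure M (A - F) < e"
    using closed_inner_regular_borel[OF assms(2-4)] \<open>e > 0\<close> unfolding closed_inner_regular_def by blast
  moreover have "compact F"
    using compact_Int_closed[OF assms(1) \<open>closed F\<close>] by simp
  ultimately show ?thesis by blast
qed

lemma compact_sets_separated:
  fixes S T :: "'a::metric_space set"
  assumes "compact S" "compact T" "S \<inter> T = {}"
  shows "\<exists>d>0. \<forall>x\<in>S. \<forall>y\<in>T. d \<le> dist x y"
proof (cases "S = {} \<or> T = {}")
  case True
  then show ?thesis by (auto intro!: exI[of _ 1])
next
  case False
  have "continuous_on (S \<times> T) (\<lambda>z. dist (fst z) (snd z))"
    by (intro continuous_intros)
  then obtain z where z: "z \<in> S \<times> T" "\<forall>w\<in>S \<times> T. dist (fst z) (snd z) \<le> dist (fst w) (snd w)"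
    using continuous_attains_inf[OF compact_Times[OF assms(1,2)]] False by blast
  then have "dist (fst z) (snd z) > 0"
    using assms(3) by (auto simp: mem_Times_iff)
  with z(2) show ?thesis by (intro exI[of _ "dist (fst z) (snd z)"]) auto
qed

lemma finite_compact_family_separated:
  fixes K :: "'i \<Rightarrow> 'a::metric_space set"
  assumes "finite I" "\<And>i. i \<in> I \<Longrightarrow> compact (K i)"
    and "\<And>i j. i \<in> I \<Longrightarrow> j \<in> I \<Longrightarrow> i \<noteq> j \<Longrightarrow> K i \<inter> K j = {}"
  shows "\<exists>d>0. \<forall>i\<in>I. \<forall>j\<in>I. i \<noteq> j \<longrightarrow> (\<forall>x\<in>K i. \<forall>y\<in>K j. d \<le> dist x y)"
  using assms
proof (induction I rule: finite_induct)
  case empty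
  then show ?case by (auto intro!: exI[of _ 1])
next
  case (insert i I)
  have "\<exists>d>0. \<forall>j\<in>I. \<forall>j'\<in>I. j \<noteq> j' \<longrightarrow> (\<forall>x\<in>K j. \<forall>y\<in>K j'. d \<le> dist x y)"
    using insert.prems by (intro insert.IH) auto
  then obtain d where d: "d > 0" "\<forall>j\<in>I. \<forall>j'\<in>I. j \<noteq> j' \<longrightarrow> (\<forall>x\<in>K j. \<forall>y\<in>K j'. d \<le> dist x y)"
    by blast
  have "compact (\<Union>j\<in>I. K j)"
    using insert.hyps(1) insert.prems(1) by (intro compact_UN) auto
  have "K i \<inter> (\<Union>j\<in>I. K j) = {}"
    using insert.hyps(2) insert.prems(2) by fastforce
  with compact_sets_separated[OF insert.prems(1)[OF insertI1] \<open>compact (\<Union>j\<in>I. K j)\<close>]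
  obtain d' where d': "d' > 0" "\<forall>x\<in>K i. \<forall>y\<in>(\<Union>j\<in>I. K j). d' \<le> dist x y"
    by blast
  have "min d d' \<le> dist x y"
    if ij: "j \<in> insert i I" "j' \<in> insert i I" "j \<noteq> j'" and xy: "x \<in> K j" "y \<in> K j'" for j j' x y
  proof -
    consider "j = i" "j' \<in> I" | "j' = i" "j \<in> I" | "j \<in> I" "j' \<in> I"
      using ij by auto
    then show ?thesis
    proof cases
      case 1
      then show ?thesis using d'(2) xy by fastforce
    next
      case 2
      then have "d' \<le> dist y x" using d'(2) xy by fastforce
      then show ?thesis by (simp add: dist_commute)
    next
      case 3
      then show ?thesis using d(2) ij xy by fastforce
    qed
  qed
  then show ?case
    using d(1) d'(1) by (intro exI[of _ "min d d'"]) auto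
qed

lemma topspace_strong_topology:
  "topspace (strong_topology :: 'a::topological_space measure topology) = borel_prob_measures"
  unfolding strong_topology_def topspace_pullback_topology by auto

lemma continuous_map_measure_strong_topology:
  assumes "B \<in> sets (borel :: 'a::topological_space measure)"
  shows "continuous_map (strong_topology :: 'a measure topology) euclideanreal (\<lambda>M. measure M B)"
proof -
  have "continuous_map strong_topology euclideanreal
     ((\<lambda>g. g B) \<circ> (\<lambda>M. restrict (\<lambda>A. measure M A) (sets (borel :: 'a measure))))"
    unfolding strong_topology_def
    by (intro continuous_map_pullback
        continuous_map_product_projection[OF assms, of "\<lambda>_. euclideanreal", simplified])
  moreover have "(\<lambda>g. g B) \<circ> (\<lambda>M. restrict (\<lambda>A. measure M A) (sets (borel :: 'a measure))) =
      (\<lambda>M. measure M B)"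
    using assms by (auto simp: fun_eq_iff)
  ultimately show ?thesis by simp
qed

lemma uniformly_tight_if_strong_closure_compact:
  fixes \<mu> :: "'i \<Rightarrow> 'a::metric_space measure"
  assumes "compact (UNIV :: 'a set)" "\<And>n. \<mu> n \<in> borel_prob_measures"
    and "compactin strong_topology (strong_topology closure_of (range \<mu>))"
    and "B \<in> sets borel" "e > 0"
  shows "\<exists>K. compact K \<and> K \<subseteq> B \<and> (\<forall>n. measure (\<mu> n) (B - K) < e)"
proof -
  define U where "U K = {M \<in> borel_prob_measures. measure M (B - K) \<in> {..<e}}" for K :: "'a set"
  have U_open: "openin strong_topology (U K)" if "compact K" for K
  proof -
    have "B - K \<in> sets borel"
      using that by (intro sets.Diff[OF assms(4)] borel_compact)
    from openin_continuous_map_preimage[OF continuous_map_measure_strong_topology[OF this], of "{..<e}"]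
    show ?thesis
      by (simp add: U_def topspace_strong_topology)
  qed
  have "strong_topology closure_of (range \<mu>) \<subseteq> \<Union>(U ` {K. compact K \<and> K \<subseteq> B})"
  proof
    fix M assume "M \<in> strong_topology closure_of (range \<mu>)"
    then have M: "M \<in> borel_prob_measures"
      using closure_of_subset_topspace[of strong_topology "range \<mu>"]
      unfolding topspace_strong_topology by blast
    then have "finite_measure M" "sets M = sets borel"
      unfolding borel_prob_measures_def by (auto intro: prob_space.finite_measure)
    from compact_space_inner_regular[OF assms(1) this assms(4,5)] M
    show "M \<in> \<Union>(U ` {K. compact K \<and> K \<subseteq> B})"
      unfolding U_def by blast
  qed
  then have "\<exists>\<F>. finite \<F> \<and> \<F> \<subseteq> U ` {K. compact K \<and> K \<subseteq> B} \<and>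
      strong_topology closure_of (range \<mu>) \<subseteq> \<Union>\<F>"
    using U_open by (intro compactinD[OF assms(3)]) auto
  then obtain \<F> where \<F>: "finite \<F>" "\<F> \<subseteq> U ` {K. compact K \<and> K \<subseteq> B}"
    and "strong_topology closure_of (range \<mu>) \<subseteq> \<Union>\<F>"
    by blast
  moreover obtain Ks where Ks: "Ks \<subseteq> {K. compact K \<and> K \<subseteq> B}" "finite Ks" "\<F> = U ` Ks"
    using finite_subset_image[OF \<F>] by blast
  ultimately have cover: "strong_topology closure_of (range \<mu>) \<subseteq> \<Union>(U ` Ks)"
    by simp
  have "measure (\<mu> n) (B - \<Union>Ks) < e" for n
  proof -
    have "\<mu> n \<in> strong_topology closure_of (range \<mu>)"
      using assms(2) by (intro closure_of_subset[THEN subsetD]) (auto simp: topspace_strong_topology)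
    with cover obtain K where K: "K \<in> Ks" "measure (\<mu> n) (B - K) < e"
      unfolding U_def by blast
    interpret prob_space "\<mu> n"
      using assms(2) by (simp add: borel_prob_measures_def)
    have "compact K"
      using K(1) Ks(1) by auto
    then have "B - K \<in> sets (\<mu> n)"
      using assms(2) by (simp add: borel_prob_measures_def sets.Diff[OF assms(4)] borel_compact)
    then have "measure (\<mu> n) (B - \<Union>Ks) \<le> measure (\<mu> n) (B - K)"
      using K(1) by (intro finite_measure_mono) auto
    with K(2) show ?thesis by linarith
  qed
  moreover have "compact (\<Union>Ks)" "\<Union>Ks \<subseteq> B"
    using Ks by auto
  ultimately show ?thesis by blast
qed

theorem mainTheorem16:
  fixes f :: "nat \<Rightarrow> 'a::metric_space \<Rightarrow> 'a"
    and \<mu> :: "nat \<Rightarrow> 'a measure"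
  assumes "compact (UNIV :: 'a set)"
    and "\<And>n. continuous_on UNIV (f n)"
    and "equicontinuous_seq f"
    and "\<And>n. \<mu> n \<in> borel_prob_measures"
    and "\<And>n. distr (\<mu> n) borel (f n) = \<mu> (Suc n)"
    and "compactin strong_topology (strong_topology closure_of (range \<mu>))"
    and "finite_borel_partition k P"
  shows "misiurewicz_class \<mu> (\<lambda>_. k) (\<lambda>_. P)"
  unfolding misiurewicz_class_def
proof (intro conjI allI impI)
  show "finite_borel_partition k P" for n :: nat by fact
  show "bdd_above (range (\<lambda>_::nat. k))" by simp
  fix \<epsilon> :: real assume "\<epsilon> > 0"
  have P_sets: "\<And>i. i < k \<Longrightarrow> P i \<in> sets borel"
    and P_disjoint: "\<And>i j. i < k \<Longrightarrow> j < k \<Longrightarrow> i \<noteq> j \<Longrightarrow> P i \<inter> P j = {}"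
    using assms(7) unfolding finite_borel_partition_def by blast+
  have "\<forall>i\<in>{..<k}. \<exists>K. compact K \<and> K \<subseteq> P i \<and> (\<forall>n. measure (\<mu> n) (P i - K) < \<epsilon>)"
    using uniformly_tight_if_strong_closure_compact[OF assms(1,4,6) P_sets \<open>\<epsilon> > 0\<close>] by blast
  then obtain K where K: "\<And>i. i < k \<Longrightarrow> compact (K i)" "\<And>i. i < k \<Longrightarrow> K i \<subseteq> P i"
    "\<And>i n. i < k \<Longrightarrow> measure (\<mu> n) (P i - K i) < \<epsilon>"
    by (metis lessThan_iff)
  have K_compact: "compact (K i)" if "i \<in> {..<k}" for i
    using K(1) that by simp
  have K_disjoint: "K i \<inter> K j = {}" if "i \<in> {..<k}" "j \<in> {..<k}" "i \<noteq> j" for i j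
    using K(2)[of i] K(2)[of j] P_disjoint[of i j] that by auto
  from finite_compact_family_separated[of "{..<k}" K, OF finite_lessThan K_compact K_disjoint]
  obtain \<delta> where "\<delta> > 0"
    "\<forall>i\<in>{..<k}. \<forall>j\<in>{..<k}. i \<noteq> j \<longrightarrow> (\<forall>x\<in>K i. \<forall>y\<in>K j. \<delta> \<le> dist x y)"
    by blast
  then show "\<exists>\<delta>>0. \<exists>C. \<forall>n. \<forall>i<k. compact (C n i) \<and> C n i \<subseteq> P i \<and>
      measure (\<mu> n) (P i - C n i) \<le> \<epsilon> \<and> (\<forall>j<k. i \<noteq> j \<longrightarrow> (\<forall>x\<in>C n i. \<forall>y\<in>C n j. \<delta> \<le> dist x y))"
    using K by (intro exI[of _ \<delta>] conjI exI[of _ "\<lambda>_. K"]) (auto intro: less_imp_le)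
qed

end
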